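(* Let $X$, $Y_k$ ($k\in\mathbb N$) and norms $\|\cdot\|_{X\oplus Y_k}$ be as in the generalized $\ell^2$-sum setting. Let $P_X:X\to X$ and $P_{Y_k}:Y_k\to Y_k$ ($k\in\mathbb N$) be projections such that the operator $P_X+P_{Y_k}:x+y_k\mapsto P_Xx+P_{Y_k}y_k$ satisfies $\|P_X+P_{Y_k}\|_{X\oplus Y_k}\le1$ for every $k$. (A) The projection $P:x+\sum_k y_k\mapsto P_Xx+\sum_kP_{Y_k}y_k$ on $\Sigma(X\oplus Y_k)$ satisfies $\|P\|_\Sigma\le1$. (B) For every $z\in\Sigma(P_XX\oplus P_{Y_k}Y_k)$ we have $\|z\|_{\Sigma(P_XX\oplus P_{Y_k}Y_k)}=\|z\|_{\Sigma(X\oplus Y_k)}$, where $\Sigma(P_XX\oplus P_{Y_k}Y_k)$ is formed from the spaces $P_XX$, $P_{Y_k}Y_k$ with the restricted norms and the restrictions of $\|\cdot\|_{X\oplus Y_k}$ to $P_XX\oplus P_{Y_k}Y_k$.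
   Context: Setting: $(X,\|\cdot\|_X)$ and $(Y_k,\|\cdot\|_{Y_k})$, $k\in\mathbb N$, are Banach spaces; for each $k$, $\|\cdot\|_{X\oplus Y_k}$ is a norm on $X\oplus Y_k$ coinciding with $\|\cdot\|_X$ on $X$ and with $\|\cdot\|_{Y_k}$ on $Y_k$, and monotone: $\|x+y_k\|_{X\oplus Y_k}\ge\|x\|_X$. Duals of direct sums are identified with direct sums of duals via $(x^*+y^* )(x+y)=x^*(x)+y^*(y)$. $\Lambda(X\oplus Y_k)$ is the set of functionals $x^*+\sum_k\alpha_ky_k^*$ with $x^*\in X^*$, $y_k^*\in Y_k^*$, $\|x^*+y_k^*\|_{X\oplus Y_k}\le1$ for all $k$, $0\le\alpha_k\le1$, $\sum\alpha_k^2\le1$. $\Sigma(X\oplus Y_k)=\{x+y_1+y_2+\dots:x\in X,y_k\in Y_k,\sum\|y_k\|_{Y_k}^2<\infty\}$ with $\|z\|_\Sigma=\|z\|_{\Sigma(X\oplus Y_k)}=\sup\{|z^*(z)|:z^*\in\Lambda(X\oplus Y_k)\}$. *)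

theory Defs
  imports "HOL-Analysis.Analysis"
begin

definition lin_on :: "'v::real_vector set \<Rightarrow> ('v \<Rightarrow> 'w::real_vector) \<Rightarrow> bool" where
  "lin_on S f \<longleftrightarrow> (\<forall>x\<in>S. \<forall>y\<in>S. f (x + y) = f x + f y) \<and>
                  (\<forall>c. \<forall>x\<in>S. f (c *\<^sub>R x) = c *\<^sub>R f x)"

definition bdd_lin_fun :: "'v::real_normed_vector set \<Rightarrow> ('v \<Rightarrow> real) \<Rightarrow> bool" where
  "bdd_lin_fun S f \<longleftrightarrow> lin_on S f \<and> (\<exists>C. \<forall>x\<in>S. \<bar>f x\<bar> \<le> C * norm x)"

definition gen_l2_setting ::
  "'a::banach set \<Rightarrow> (nat \<Rightarrow> 'b::banach set) \<Rightarrow> (nat \<Rightarrow> 'a \<times> 'b \<Rightarrow> real) \<Rightarrow> bool" where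
  "gen_l2_setting X Y N \<longleftrightarrow>
     subspace X \<and> closed X \<and> (\<forall>k. subspace (Y k) \<and> closed (Y k)) \<and>
     (\<forall>k. \<forall>x\<in>X. \<forall>x'\<in>X. \<forall>y\<in>Y k. \<forall>y'\<in>Y k.
           N k (x + x', y + y') \<le> N k (x, y) + N k (x', y')) \<and>
     (\<forall>k. \<forall>c. \<forall>x\<in>X. \<forall>y\<in>Y k. N k (c *\<^sub>R x, c *\<^sub>R y) = \<bar>c\<bar> * N k (x, y)) \<and>
     (\<forall>k. \<forall>x\<in>X. \<forall>y\<in>Y k. N k (x, y) = 0 \<longrightarrow> x = 0 \<and> y = 0) \<and>
     (\<forall>k. \<forall>x\<in>X. N k (x, 0) = norm x) \<and>
     (\<forall>k. \<forall>y\<in>Y k. N k (0, y) = norm y) \<and>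
     (\<forall>k. \<forall>x\<in>X. \<forall>y\<in>Y k. N k (x, y) \<ge> norm x)"

definition Sigma_sp :: "'a::real_normed_vector set \<Rightarrow> (nat \<Rightarrow> 'b::real_normed_vector set)
    \<Rightarrow> ('a \<times> (nat \<Rightarrow> 'b)) set" where
  "Sigma_sp X Y = {(x, y). x \<in> X \<and> (\<forall>k. y k \<in> Y k) \<and> summable (\<lambda>k. (norm (y k))\<^sup>2)}"

text \<open>Lambda(X (+) Y k): data (x*, (y_k*)_k, (alpha_k)_k) representing x* + sum alpha_k y_k*.\<close>
definition Lambda_set :: "'a::real_normed_vector set \<Rightarrow> (nat \<Rightarrow> 'b::real_normed_vector set)
    \<Rightarrow> (nat \<Rightarrow> 'a \<times> 'b \<Rightarrow> real) \<Rightarrow> (('a \<Rightarrow> real) \<times> (nat \<Rightarrow> 'b \<Rightarrow> real) \<times> (nat \<Rightarrow> real)) set" where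
  "Lambda_set X Y N = {(xs, ys, \<alpha>).
      bdd_lin_fun X xs \<and> (\<forall>k. bdd_lin_fun (Y k) (ys k)) \<and>
      (\<forall>k. \<forall>x\<in>X. \<forall>y\<in>Y k. \<bar>xs x + ys k y\<bar> \<le> N k (x, y)) \<and>
      (\<forall>k. 0 \<le> \<alpha> k \<and> \<alpha> k \<le> 1) \<and> summable (\<lambda>k. (\<alpha> k)\<^sup>2) \<and> (\<Sum>k. (\<alpha> k)\<^sup>2) \<le> 1}"

definition lam_apply :: "(('a \<Rightarrow> real) \<times> (nat \<Rightarrow> 'b \<Rightarrow> real) \<times> (nat \<Rightarrow> real))
    \<Rightarrow> ('a \<times> (nat \<Rightarrow> 'b)) \<Rightarrow> real" where
  "lam_apply l z = (case l of (xs, ys, \<alpha>) \<Rightarrow> case z of (x, y) \<Rightarrow>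
      xs x + (\<Sum>k. \<alpha> k * ys k (y k)))"

definition sigma_norm :: "'a::real_normed_vector set \<Rightarrow> (nat \<Rightarrow> 'b::real_normed_vector set)
    \<Rightarrow> (nat \<Rightarrow> 'a \<times> 'b \<Rightarrow> real) \<Rightarrow> ('a \<times> (nat \<Rightarrow> 'b)) \<Rightarrow> real" where
  "sigma_norm X Y N z = (SUP l\<in>Lambda_set X Y N. \<bar>lam_apply l z\<bar>)"

definition sum_proj :: "('a \<Rightarrow> 'a) \<Rightarrow> (nat \<Rightarrow> 'b \<Rightarrow> 'b) \<Rightarrow> ('a \<times> (nat \<Rightarrow> 'b)) \<Rightarrow> ('a \<times> (nat \<Rightarrow> 'b))" where
  "sum_proj PX PY z = (case z of (x, y) \<Rightarrow> (PX x, \<lambda>k. PY k (y k)))"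

end

theory Submission
  imports Defs
begin

text \<open>The adjoint \<open>P\<^sup>*\<close> of \<open>P = P\<^sub>X + \<Sum>\<^sub>k P\<^sub>Y\<^sub>k\<close> maps \<open>\<Lambda>(X' \<oplus> Y'\<^sub>k)\<close> into
  \<open>\<Lambda>(X \<oplus> Y\<^sub>k)\<close> whenever \<open>P\<close> maps into \<open>X' \<oplus> Y'\<^sub>k\<close>: the pulled-back pair
  \<open>x\<^sup>* \<circ> P\<^sub>X, y\<^sub>k\<^sup>* \<circ> P\<^sub>Y\<^sub>k\<close> still has joint norm at most 1 because \<open>P\<^sub>X + P\<^sub>Y\<^sub>k\<close> is a
  contraction for \<open>\<parallel>\<cdot>\<parallel>\<^sub>X\<^sub>\<oplus>\<^sub>Y\<^sub>k\<close>. Hence \<open>|z\<^sup>*(P z)| = |(P\<^sup>* z\<^sup>*)(z)| \<le> \<parallel>z\<parallel>\<^sub>\<Sigma>\<close>,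
  which is (A). For (B), a functional on the small space evaluated at a fixed point \<open>z = P z\<close>
  equals its pullback evaluated at \<open>z\<close>, giving \<open>\<le>\<close>; conversely every functional in
  \<open>\<Lambda>(X \<oplus> Y\<^sub>k)\<close> restricts to one in \<open>\<Lambda>(P\<^sub>XX \<oplus> P\<^sub>Y\<^sub>kY\<^sub>k)\<close>, giving \<open>\<ge>\<close>.
  All suprema are finite since \<open>|z\<^sup>*(x + \<Sum> y\<^sub>k)| \<le> \<parallel>x\<parallel> + \<Sum> \<alpha>\<^sub>k \<parallel>y\<^sub>k\<parallel>\<close>, which AM-GM
  bounds by \<open>\<parallel>x\<parallel> + (1 + \<Sum> \<parallel>y\<^sub>k\<parallel>\<^sup>2) / 2\<close>.\<close>

lemma lam_apply_simp: "lam_apply (xs, ys, \<alpha>) (x, y) = xs x + (\<Sum>k. \<alpha> k * ys k (y k))"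
  by (simp add: lam_apply_def)

lemma lin_on_0: "lin_on S f \<Longrightarrow> 0 \<in> S \<Longrightarrow> f 0 = 0"
  unfolding lin_on_def by (metis scale_zero_left)

lemma lin_on_subset: "lin_on S f \<Longrightarrow> T \<subseteq> S \<Longrightarrow> lin_on T f"
  unfolding lin_on_def by blast

lemma linear_imp_lin_on: "linear f \<Longrightarrow> lin_on S f"
  unfolding lin_on_def by (simp add: linear_add linear_scale)

lemma lin_on_compose:
  assumes "lin_on S f" "f ` S \<subseteq> T" "lin_on T g"
  shows "lin_on S (g \<circ> f)"
  using assms unfolding lin_on_def by (simp add: image_subset_iff)

lemma gen_l2_settingD:
  assumes "gen_l2_setting X Y N"
  shows "0 \<in> X" "0 \<in> Y k" "x \<in> X \<Longrightarrow> N k (x, 0) = norm x" "y \<in> Y k \<Longrightarrow> N k (0, y) = norm y"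
    "x \<in> X \<Longrightarrow> y \<in> Y k \<Longrightarrow> 0 \<le> N k (x, y)"
proof -
  show "0 \<in> X" "0 \<in> Y k"
    using assms unfolding gen_l2_setting_def by (auto intro: subspace_0)
  show "x \<in> X \<Longrightarrow> N k (x, 0) = norm x" "y \<in> Y k \<Longrightarrow> N k (0, y) = norm y"
    using assms unfolding gen_l2_setting_def by auto
  assume "x \<in> X" "y \<in> Y k"
  then have "norm x \<le> N k (x, y)"
    using assms unfolding gen_l2_setting_def by auto
  then show "0 \<le> N k (x, y)"
    using norm_ge_zero order_trans by blast
qed

lemma abs_le_norm_if_joint_bound:
  assumes f: "lin_on X f" and g: "lin_on Y g" and "0 \<in> X" "0 \<in> Y"
    and joint: "\<forall>x\<in>X. \<forall>y\<in>Y. \<bar>f x + g y\<bar> \<le> M (x, y)"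
    and MX: "\<forall>x\<in>X. M (x, 0) = norm x" and MY: "\<forall>y\<in>Y. M (0, y) = norm y"
  shows "x \<in> X \<Longrightarrow> \<bar>f x\<bar> \<le> norm x"
    and "y \<in> Y \<Longrightarrow> \<bar>g y\<bar> \<le> norm y"
  using joint MX MY lin_on_0[OF f] lin_on_0[OF g] \<open>0 \<in> X\<close> \<open>0 \<in> Y\<close> by force+

lemma Lambda_set_nonempty:
  assumes "\<forall>k. \<forall>x\<in>X. \<forall>y\<in>Y k. 0 \<le> N k (x, y)"
  shows "Lambda_set X Y N \<noteq> {}"
proof -
  have "(\<lambda>_. 0, \<lambda>_ _. 0, \<lambda>_. 0) \<in> Lambda_set X Y N"
    using assms unfolding Lambda_set_def bdd_lin_fun_def lin_on_def by (auto intro!: exI[of _ 0])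
  then show ?thesis by blast
qed

lemma Lambda_set_antimono:
  assumes "X' \<subseteq> X" "\<forall>k. Y' k \<subseteq> Y k"
  shows "Lambda_set X Y N \<subseteq> Lambda_set X' Y' N"
  using assms unfolding Lambda_set_def bdd_lin_fun_def by (fastforce intro: lin_on_subset)

lemma abs_lam_apply_le:
  assumes l: "(xs, ys, \<alpha>) \<in> Lambda_set X Y N" and z: "(x, y) \<in> Sigma_sp X Y"
    and "0 \<in> X" and Y0: "\<forall>k. 0 \<in> Y k"
    and NX: "\<forall>k. \<forall>x\<in>X. N k (x, 0) = norm x" and NY: "\<forall>k. \<forall>y\<in>Y k. N k (0, y) = norm y"
  shows "\<bar>lam_apply (xs, ys, \<alpha>) (x, y)\<bar> \<le> norm x + (1 + (\<Sum>k. (norm (y k))\<^sup>2)) / 2"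
proof -
  from l have lin: "lin_on X xs" "lin_on (Y k) (ys k)"
    and joint: "\<forall>x\<in>X. \<forall>v\<in>Y k. \<bar>xs x + ys k v\<bar> \<le> N k (x, v)"
    and \<alpha>: "0 \<le> \<alpha> k" "summable (\<lambda>k. (\<alpha> k)\<^sup>2)" "(\<Sum>k. (\<alpha> k)\<^sup>2) \<le> 1" for k
    unfolding Lambda_set_def bdd_lin_fun_def by auto
  from z have "x \<in> X" and yY: "y k \<in> Y k" and sy: "summable (\<lambda>k. (norm (y k))\<^sup>2)" for k
    unfolding Sigma_sp_def by auto
  note bounds = abs_le_norm_if_joint_bound[OF lin(1) lin(2) \<open>0 \<in> X\<close> _ joint]
  have "\<bar>xs x\<bar> \<le> norm x"
    using bounds(1)[of 0] \<open>x \<in> X\<close> Y0 NX NY by blast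
  define g where "g k = ((\<alpha> k)\<^sup>2 + (norm (y k))\<^sup>2) / 2" for k
  have term_le: "\<bar>\<alpha> k * ys k (y k)\<bar> \<le> g k" for k
  proof -
    have "\<bar>\<alpha> k * ys k (y k)\<bar> \<le> \<alpha> k * norm (y k)"
      using bounds(2)[of k] yY Y0 NX NY \<alpha>(1) by (simp add: abs_mult mult_left_mono)
    also have "\<dots> \<le> g k"
      using sum_squares_bound[of "\<alpha> k" "norm (y k)"] unfolding g_def by (simp add: power2_eq_square)
    finally show ?thesis .
  qed
  have "summable g"
    unfolding g_def using \<alpha>(2) sy by (intro summable_divide summable_add)
  then have "summable (\<lambda>k. \<bar>\<alpha> k * ys k (y k)\<bar>)"
    by (rule summable_comparison_test[rotated]) (use term_le in auto)
  then have "\<bar>\<Sum>k. \<alpha> k * ys k (y k)\<bar> \<le> suminf g"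
    using summable_rabs suminf_le[OF term_le _ \<open>summable g\<close>] by (meson order_trans)
  also have "suminf g = ((\<Sum>k. (\<alpha> k)\<^sup>2) + (\<Sum>k. (norm (y k))\<^sup>2)) / 2"
    unfolding g_def using suminf_divide[OF summable_add[OF \<alpha>(2) sy]] suminf_add[OF \<alpha>(2) sy]
    by simp
  also have "\<dots> \<le> (1 + (\<Sum>k. (norm (y k))\<^sup>2)) / 2"
    using \<alpha>(3) by simp
  finally show ?thesis
    using \<open>\<bar>xs x\<bar> \<le> norm x\<close> unfolding lam_apply_simp by linarith
qed

lemma bdd_above_lam_apply:
  assumes "z \<in> Sigma_sp X Y" "0 \<in> X" "\<forall>k. 0 \<in> Y k"
    and "\<forall>k. \<forall>x\<in>X. N k (x, 0) = norm x" "\<forall>k. \<forall>y\<in>Y k. N k (0, y) = norm y"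
  shows "bdd_above ((\<lambda>l. \<bar>lam_apply l z\<bar>) ` Lambda_set X Y N)"
proof -
  obtain x y where z: "z = (x, y)" by fastforce
  show ?thesis
    using abs_lam_apply_le[OF _ assms(1)[unfolded z] assms(2-)] unfolding z bdd_above_def
    by (intro exI[of _ "norm x + (1 + (\<Sum>k. (norm (y k))\<^sup>2)) / 2"]) auto
qed

lemma sigma_norm_le_if_dominated:
  assumes "Lambda_set X Y N \<noteq> {}"
    and "bdd_above ((\<lambda>m. \<bar>lam_apply m z'\<bar>) ` Lambda_set X' Y' N)"
    and "\<And>l. l \<in> Lambda_set X Y N \<Longrightarrow> \<exists>m\<in>Lambda_set X' Y' N. \<bar>lam_apply l z\<bar> \<le> \<bar>lam_apply m z'\<bar>"
  shows "sigma_norm X Y N z \<le> sigma_norm X' Y' N z'"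
  unfolding sigma_norm_def using assms by (rule cSUP_mono)

definition Lambda_pullback :: "('a \<Rightarrow> 'a) \<Rightarrow> (nat \<Rightarrow> 'b \<Rightarrow> 'b)
    \<Rightarrow> ('a \<Rightarrow> real) \<times> (nat \<Rightarrow> 'b \<Rightarrow> real) \<times> (nat \<Rightarrow> real)
    \<Rightarrow> ('a \<Rightarrow> real) \<times> (nat \<Rightarrow> 'b \<Rightarrow> real) \<times> (nat \<Rightarrow> real)" where
  "Lambda_pullback PX PY l = (case l of (xs, ys, \<alpha>) \<Rightarrow> (xs \<circ> PX, \<lambda>k. ys k \<circ> PY k, \<alpha>))"

lemma lam_apply_Lambda_pullback:
  "lam_apply (Lambda_pullback PX PY l) z = lam_apply l (sum_proj PX PY z)"
  by (cases l; cases z) (simp add: Lambda_pullback_def sum_proj_def lam_apply_simp)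

lemma Lambda_pullback_in_Lambda_set:
  assumes l: "l \<in> Lambda_set X' Y' N"
    and "0 \<in> X" and Y0: "\<forall>k. 0 \<in> Y k"
    and NX: "\<forall>k. \<forall>x\<in>X. N k (x, 0) = norm x" and NY: "\<forall>k. \<forall>y\<in>Y k. N k (0, y) = norm y"
    and PX: "lin_on X PX" "PX ` X \<subseteq> X'"
    and PY: "\<forall>k. lin_on (Y k) (PY k)" "\<forall>k. PY k ` Y k \<subseteq> Y' k"
    and contr: "\<forall>k. \<forall>x\<in>X. \<forall>y\<in>Y k. N k (PX x, PY k y) \<le> N k (x, y)"
  shows "Lambda_pullback PX PY l \<in> Lambda_set X Y N"
proof -
  obtain xs ys \<alpha> where l_eq: "l = (xs, ys, \<alpha>)" by (cases l) auto
  from l have lin: "lin_on X' xs" "lin_on (Y' k) (ys k)"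
    and joint': "\<forall>x\<in>X'. \<forall>v\<in>Y' k. \<bar>xs x + ys k v\<bar> \<le> N k (x, v)" for k
    unfolding l_eq Lambda_set_def bdd_lin_fun_def by auto
  have lin_xs: "lin_on X (xs \<circ> PX)"
    by (rule lin_on_compose[OF PX lin(1)])
  have lin_ys: "lin_on (Y k) (ys k \<circ> PY k)" for k
    using PY by (intro lin_on_compose[OF _ _ lin(2)]) auto
  have joint: "\<forall>x\<in>X. \<forall>y\<in>Y k. \<bar>(xs \<circ> PX) x + (ys k \<circ> PY k) y\<bar> \<le> N k (x, y)" for k
  proof (intro ballI)
    fix x y assume "x \<in> X" "y \<in> Y k"
    then have "\<bar>xs (PX x) + ys k (PY k y)\<bar> \<le> N k (PX x, PY k y)"
      using joint' PX(2) PY(2) by blast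
    also have "\<dots> \<le> N k (x, y)"
      using contr \<open>x \<in> X\<close> \<open>y \<in> Y k\<close> by blast
    finally show "\<bar>(xs \<circ> PX) x + (ys k \<circ> PY k) y\<bar> \<le> N k (x, y)" by simp
  qed
  note bounds = abs_le_norm_if_joint_bound[OF lin_xs lin_ys \<open>0 \<in> X\<close> _ joint]
  have "bdd_lin_fun X (xs \<circ> PX)"
    unfolding bdd_lin_fun_def using lin_xs bounds(1)[of 0] Y0 NX NY by (auto intro!: exI[of _ 1])
  moreover have "bdd_lin_fun (Y k) (ys k \<circ> PY k)" for k
    unfolding bdd_lin_fun_def using lin_ys bounds(2)[of k] Y0 NX NY by (auto intro!: exI[of _ 1])
  ultimately show ?thesis
    using l joint unfolding l_eq Lambda_pullback_def Lambda_set_def by auto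
qed

lemma sum_proj_in_Sigma_sp:
  assumes z: "z \<in> Sigma_sp X Y"
    and maps: "PX ` X \<subseteq> X" "\<forall>k. PY k ` Y k \<subseteq> Y k"
    and norm_le: "\<forall>k. \<forall>y\<in>Y k. norm (PY k y) \<le> norm y"
  shows "sum_proj PX PY z \<in> Sigma_sp X Y"
proof -
  obtain x y where z_eq: "z = (x, y)" by fastforce
  from z have "x \<in> X" and yY: "y k \<in> Y k" and "summable (\<lambda>k. (norm (y k))\<^sup>2)" for k
    unfolding z_eq Sigma_sp_def by auto
  moreover have "summable (\<lambda>k. (norm (PY k (y k)))\<^sup>2)"
    by (rule summable_comparison_test[OF _ \<open>summable (\<lambda>k. (norm (y k))\<^sup>2)\<close>])
      (use norm_le yY in \<open>auto intro!: power_mono\<close>)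
  ultimately show ?thesis
    using maps unfolding z_eq sum_proj_def Sigma_sp_def by (auto simp: image_subset_iff)
qed

locale l2_sum_contraction =
  fixes Y :: "nat \<Rightarrow> 'b::banach set" and N :: "nat \<Rightarrow> 'a::banach \<times> 'b \<Rightarrow> real"
    and PX :: "'a \<Rightarrow> 'a" and PY :: "nat \<Rightarrow> 'b \<Rightarrow> 'b"
  assumes setting: "gen_l2_setting UNIV Y N"
    and PX_lin: "linear PX"
    and PY_lin: "\<forall>k. lin_on (Y k) (PY k)"
    and PY_maps: "\<forall>k. PY k ` Y k \<subseteq> Y k"
    and contr: "\<forall>k. \<forall>x. \<forall>y\<in>Y k. N k (PX x, PY k y) \<le> N k (x, y)"
begin

lemmas setting_facts = gen_l2_settingD[OF setting]

lemma PX_0: "PX 0 = 0"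
  using PX_lin by (rule linear_0)

lemma PY_0: "PY k 0 = 0"
  using PY_lin setting_facts(2) lin_on_0 by blast

lemma Lambda_set_nonempty_UNIV: "Lambda_set UNIV Y N \<noteq> {}"
  using setting_facts(5) by (intro Lambda_set_nonempty) blast

lemma bdd_above_lam_apply_UNIV:
  "z \<in> Sigma_sp UNIV Y \<Longrightarrow> bdd_above ((\<lambda>l. \<bar>lam_apply l z\<bar>) ` Lambda_set UNIV Y N)"
  using setting_facts(2-4) by (intro bdd_above_lam_apply) auto

lemma Lambda_pullback_in_Lambda_set_UNIV:
  assumes "l \<in> Lambda_set X' Y' N" "range PX \<subseteq> X'" "\<forall>k. PY k ` Y k \<subseteq> Y' k"
  shows "Lambda_pullback PX PY l \<in> Lambda_set UNIV Y N"
  using setting_facts(2-4) contr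
  by (intro Lambda_pullback_in_Lambda_set[OF assms(1) _ _ _ _ linear_imp_lin_on[OF PX_lin]
        assms(2) PY_lin assms(3)]) auto

lemma norm_PY_le: "y \<in> Y k \<Longrightarrow> norm (PY k y) \<le> norm y"
  using contr PX_0 setting_facts(4) PY_maps by (metis image_subset_iff)

lemma sum_proj_in_Sigma_sp_UNIV: "z \<in> Sigma_sp UNIV Y \<Longrightarrow> sum_proj PX PY z \<in> Sigma_sp UNIV Y"
  using sum_proj_in_Sigma_sp[OF _ _ PY_maps] norm_PY_le by blast

lemma sigma_norm_sum_proj_le:
  assumes "z \<in> Sigma_sp UNIV Y"
  shows "sigma_norm UNIV Y N (sum_proj PX PY z) \<le> sigma_norm UNIV Y N z"
  using PY_maps
  by (intro sigma_norm_le_if_dominated[OF Lambda_set_nonempty_UNIV bdd_above_lam_apply_UNIV[OF assms]])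
    (auto intro!: bexI[OF _ Lambda_pullback_in_Lambda_set_UNIV] simp: lam_apply_Lambda_pullback)

lemma sigma_norm_range_eq:
  assumes PX_idem: "\<forall>x. PX (PX x) = PX x" and PY_idem: "\<forall>k. \<forall>y\<in>Y k. PY k (PY k y) = PY k y"
    and z: "z \<in> Sigma_sp (range PX) (\<lambda>k. PY k ` Y k)"
  shows "sigma_norm (range PX) (\<lambda>k. PY k ` Y k) N z = sigma_norm UNIV Y N z"
proof -
  obtain x y where z_eq: "z = (x, y)" by fastforce
  from z have "x \<in> range PX" and y: "y k \<in> PY k ` Y k" and "summable (\<lambda>k. (norm (y k))\<^sup>2)" for k
    unfolding z_eq Sigma_sp_def by auto
  then have "z \<in> Sigma_sp UNIV Y"
    using PY_maps unfolding z_eq Sigma_sp_def by blast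
  have "PX x = x"
    using \<open>x \<in> range PX\<close> PX_idem by auto
  moreover have "PY k (y k) = y k" for k
    using y[of k] PY_idem by auto
  ultimately have fixed: "sum_proj PX PY z = z"
    unfolding z_eq sum_proj_def by simp
  have "\<forall>k. 0 \<in> PY k ` Y k"
    using PY_0 setting_facts(2) by (metis image_eqI)
  moreover have "\<forall>k. \<forall>y\<in>PY k ` Y k. N k (0, y) = norm y"
    using setting_facts(4) PY_maps by (auto simp: image_subset_iff)
  ultimately have "bdd_above ((\<lambda>l. \<bar>lam_apply l z\<bar>) ` Lambda_set (range PX) (\<lambda>k. PY k ` Y k) N)"
    using PX_0 setting_facts(3) by (intro bdd_above_lam_apply[OF z]) (auto simp: rangeI)
  then have "sigma_norm UNIV Y N z \<le> sigma_norm (range PX) (\<lambda>k. PY k ` Y k) N z"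
    using Lambda_set_antimono[of "range PX" UNIV "\<lambda>k. PY k ` Y k" Y] PY_maps
    by (intro sigma_norm_le_if_dominated[OF Lambda_set_nonempty_UNIV]) auto
  moreover have "sigma_norm (range PX) (\<lambda>k. PY k ` Y k) N z \<le> sigma_norm UNIV Y N z"
  proof (rule sigma_norm_le_if_dominated[OF _ bdd_above_lam_apply_UNIV[OF \<open>z \<in> Sigma_sp UNIV Y\<close>]])
    show "Lambda_set (range PX) (\<lambda>k. PY k ` Y k) N \<noteq> {}"
      using setting_facts(5) PY_maps by (intro Lambda_set_nonempty) blast
    show "\<exists>m\<in>Lambda_set UNIV Y N. \<bar>lam_apply l z\<bar> \<le> \<bar>lam_apply m z\<bar>"
      if "l \<in> Lambda_set (range PX) (\<lambda>k. PY k ` Y k) N" for l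
      using Lambda_pullback_in_Lambda_set_UNIV[OF that]
      by (metis lam_apply_Lambda_pullback fixed order_refl subset_refl)
  qed
  ultimately show ?thesis by linarith
qed

end

theorem lemma2p3:
  fixes PX :: "'a::banach \<Rightarrow> 'a" and PY :: "nat \<Rightarrow> 'b::banach \<Rightarrow> 'b"
    and Y :: "nat \<Rightarrow> 'b set" and N :: "nat \<Rightarrow> 'a \<times> 'b \<Rightarrow> real"
  assumes setting: "gen_l2_setting (UNIV :: 'a set) Y N"
    and PX_lin: "linear PX" and PX_idem: "\<forall>x. PX (PX x) = PX x"
    and PY_lin: "\<forall>k. lin_on (Y k) (PY k)"
    and PY_maps: "\<forall>k. PY k ` Y k \<subseteq> Y k"
    and PY_idem: "\<forall>k. \<forall>y\<in>Y k. PY k (PY k y) = PY k y"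
    and contr: "\<forall>k. \<forall>x. \<forall>y\<in>Y k. N k (PX x, PY k y) \<le> N k (x, y)"
  shows "(\<forall>z\<in>Sigma_sp UNIV Y. sum_proj PX PY z \<in> Sigma_sp UNIV Y \<and>
             sigma_norm UNIV Y N (sum_proj PX PY z) \<le> sigma_norm UNIV Y N z)
       \<and> (\<forall>z\<in>Sigma_sp (range PX) (\<lambda>k. PY k ` Y k).
             sigma_norm (range PX) (\<lambda>k. PY k ` Y k) N z = sigma_norm UNIV Y N z)"
proof -
  interpret l2_sum_contraction Y N PX PY
    using setting PX_lin PY_lin PY_maps contr by (simp add: l2_sum_contraction_def)
  show ?thesis
    using sum_proj_in_Sigma_sp_UNIV sigma_norm_sum_proj_le sigma_norm_range_eq[OF PX_idem PY_idem]
    by blast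
qed

end
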